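(* Let $A(z)=\sum_{n\ge0}a_nz^n$ be the generating function of Dyck arches ending with a catastrophe. Then for $n\ge2$, $a_n=\binom{n-2}{\lfloor\frac{n-3}{2}\rfloor}$ (and $a_0=a_1=0$), and \[A(z)=z\,\frac{M(z)-E(z)-M_1(z)}{E(z)}=\frac12\,\frac{2z^2+z-1+\sqrt{(1-2z)(1+2z)(1-z)^2}}{1-2z}=z^3+z^4+3z^5+4z^6+10z^7+15z^8+35z^9+O(z^{10}),\] where $M(z)$, $E(z)$, $M_1(z)$ are the generating functions (by length) of classical Dyck meanders, Dyck excursions, and Dyck meanders ending at altitude $1$, respectively.
   Context: Classical Dyck paths use steps $+1$ and $-1$ (each of weight $1$) and never go below altitude $0$, starting at $0$; a Dyck meander may end anywhere, a Dyck excursion ends at $0$. A Dyck path with catastrophes additionally allows catastrophes: steps from an altitude $h>1$ directly to altitude $0$ (weight $1$). A Dyck arch ending with a catastrophe is a Dyck path with catastrophes starting at altitude $0$ whose last step is a catastrophe and which does not visit altitude $0$ between its start and its end. *)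

theory Defs
  imports Complex_Main "HOL-Computational_Algebra.Formal_Power_Series"
begin

text \<open>Steps: U = +1, D = -1, C = catastrophe (jump from altitude h > 1 to 0); each of weight 1.\<close>
datatype step = U | D | C

fun valid_from :: "nat \<Rightarrow> step list \<Rightarrow> bool" where
  "valid_from h [] = True"
| "valid_from h (U # s) = valid_from (h + 1) s"
| "valid_from h (D # s) = (1 \<le> h \<and> valid_from (h - 1) s)"
| "valid_from h (C # s) = (1 < h \<and> valid_from 0 s)"

text \<open>Altitudes reached after each step (the i-th entry is the altitude after step i+1).\<close>
fun alts :: "nat \<Rightarrow> step list \<Rightarrow> nat list" where
  "alts h [] = []"
| "alts h (U # s) = (h + 1) # alts (h + 1) s"
| "alts h (D # s) = (h - 1) # alts (h - 1) s"
| "alts h (C # s) = 0 # alts 0 s"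

definition end_alt :: "step list \<Rightarrow> nat" where
  "end_alt s = (if s = [] then 0 else last (alts 0 s))"

definition dyck_cat_path :: "step list \<Rightarrow> bool" where
  "dyck_cat_path s \<longleftrightarrow> valid_from 0 s"

definition dyck_meander :: "step list \<Rightarrow> bool" where
  "dyck_meander s \<longleftrightarrow> valid_from 0 s \<and> C \<notin> set s"

definition dyck_excursion :: "step list \<Rightarrow> bool" where
  "dyck_excursion s \<longleftrightarrow> dyck_meander s \<and> end_alt s = 0"

definition dyck_meander1 :: "step list \<Rightarrow> bool" where
  "dyck_meander1 s \<longleftrightarrow> dyck_meander s \<and> end_alt s = 1"

definition cat_arch :: "step list \<Rightarrow> bool" where
  "cat_arch s \<longleftrightarrow> dyck_cat_path s \<and> s \<noteq> [] \<and> last s = C \<and>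
     (\<forall>i < length s - 1. alts 0 s ! i \<noteq> 0)"

definition count_len :: "(step list \<Rightarrow> bool) \<Rightarrow> nat \<Rightarrow> nat" where
  "count_len P n = card {s. length s = n \<and> P s}"

definition gf :: "(step list \<Rightarrow> bool) \<Rightarrow> real fps" where
  "gf P = Abs_fps (\<lambda>n. real (count_len P n))"

end

(*
  Cutting off the initial up-step and the final catastrophe, an arch of length n + 2 is a
  meander of length n ending at a positive altitude, lifted by one.  The reflection principle
  counts these meanders by a telescoping sum of binomial coefficients, which collapses to
  binom(n, (n - 1) div 2).  Decomposing meanders at their last visit to altitude 0 gives
  M - E = z E M, M1 = z E^2, E = 1 + z M1 and A = z^2 (M - E), whence the quotient formula.
  All coefficients are at most 2^n, so the series converge for |z| < 1/2; there E solves
  E = 1 + z^2 E^2, and continuity from E(0) = 1 selects the root with the minus sign.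
*)

theory Submission
  imports Defs "HOL-Analysis.FPS_Convergence"
begin

fun final_alt :: "nat \<Rightarrow> step list \<Rightarrow> nat" where
  "final_alt h [] = h"
| "final_alt h (U # s) = final_alt (h + 1) s"
| "final_alt h (D # s) = final_alt (h - 1) s"
| "final_alt h (C # s) = final_alt 0 s"

lemma length_alts [simp]: "length (alts h s) = length s"
  by (induction h s rule: alts.induct) auto

lemma alts_eq_Nil_iff [simp]: "alts h s = [] \<longleftrightarrow> s = []"
  by (metis length_alts length_0_conv)

lemma last_alts: "s \<noteq> [] \<Longrightarrow> last (alts h s) = final_alt h s"
proof (induction s arbitrary: h)
  case (Cons x s)
  then show ?case by (cases x; cases s) auto
qed simp

lemma end_alt_eq_final_alt: "end_alt s = final_alt 0 s"
  by (simp add: end_alt_def last_alts)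

lemma finite_step_lists_length: "finite {s :: step list. length s = m}"
proof -
  have "(UNIV :: step set) = {U, D, C}"
    by (auto intro: step.exhaust)
  then have "finite (UNIV :: step set)"
    by (metis finite.emptyI finite_insert)
  then show ?thesis
    using finite_lists_length_eq[of "UNIV :: step set" m] by simp
qed

lemma card_by_first_step:
  fixes S :: "step list set"
  assumes "finite S" and "[] \<notin> S"
  shows "card S = card {t. U # t \<in> S} + card {t. D # t \<in> S} + card {t. C # t \<in> S}"
proof -
  let ?S = "\<lambda>x. Cons x ` {t. x # t \<in> S}"
  have split: "S = (?S U \<union> ?S D) \<union> ?S C"
  proof (intro equalityI subsetI)
    fix s assume "s \<in> S"
    with assms(2) obtain x t where "s = x # t"
      by (cases s) auto
    with \<open>s \<in> S\<close> show "s \<in> (?S U \<union> ?S D) \<union> ?S C"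
      by (cases x) auto
  qed auto
  have fin: "finite {t. x # t \<in> S}" for x
    using finite_vimageI[OF assms(1), of "Cons x"] by (simp add: vimage_def)
  have "card S = card (?S U \<union> ?S D) + card (?S C)"
    by (subst split, rule card_Un_disjoint) (use fin in auto)
  also have "card (?S U \<union> ?S D) = card (?S U) + card (?S D)"
    by (rule card_Un_disjoint) (use fin in auto)
  finally show ?thesis
    by (simp add: card_image)
qed

fun meander_count :: "(nat \<Rightarrow> bool) \<Rightarrow> nat \<Rightarrow> nat \<Rightarrow> nat" where
  "meander_count \<phi> 0 h = (if \<phi> h then 1 else 0)"
| "meander_count \<phi> (Suc m) h =
     meander_count \<phi> m (Suc h) + (if 1 \<le> h then meander_count \<phi> m (h - 1) else 0)"

lemma card_meanders:
  "card {s. length s = m \<and> valid_from h s \<and> C \<notin> set s \<and> \<phi> (final_alt h s)} = meander_count \<phi> m h"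
proof (induction m arbitrary: h)
  case 0
  have "{s. length s = 0 \<and> valid_from h s \<and> C \<notin> set s \<and> \<phi> (final_alt h s)} =
      (if \<phi> h then {[]} else {})"
    by auto
  then show ?case by simp
next
  case (Suc m)
  let ?S = "{s. length s = Suc m \<and> valid_from h s \<and> C \<notin> set s \<and> \<phi> (final_alt h s)}"
  have "finite ?S"
    by (rule finite_subset[OF _ finite_step_lists_length[of "Suc m"]]) auto
  then have "card ?S = card {t. U # t \<in> ?S} + card {t. D # t \<in> ?S} + card {t. C # t \<in> ?S}"
    by (rule card_by_first_step) auto
  also have "{t. U # t \<in> ?S} =
      {s. length s = m \<and> valid_from (Suc h) s \<and> C \<notin> set s \<and> \<phi> (final_alt (Suc h) s)}"
    by auto
  also have "{t. D # t \<in> ?S} = (if 1 \<le> h then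
      {s. length s = m \<and> valid_from (h - 1) s \<and> C \<notin> set s \<and> \<phi> (final_alt (h - 1) s)} else {})"
    by auto
  also have "{t. C # t \<in> ?S} = {}"
    by auto
  finally show ?case
    using Suc by simp
qed

lemma count_len_meander_end_alt:
  "count_len (\<lambda>s. dyck_meander s \<and> \<phi> (end_alt s)) n = meander_count \<phi> n 0"
  by (simp add: count_len_def dyck_meander_def end_alt_eq_final_alt card_meanders[symmetric] conj_assoc)

lemma count_len_dyck_meander: "count_len dyck_meander n = meander_count (\<lambda>_. True) n 0"
  using count_len_meander_end_alt[of "\<lambda>_. True"] by simp

lemma count_len_dyck_excursion: "count_len dyck_excursion n = meander_count (\<lambda>h. h = 0) n 0"
  using count_len_meander_end_alt[of "\<lambda>h. h = 0"] by (simp add: dyck_excursion_def[abs_def])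

lemma count_len_dyck_meander1: "count_len dyck_meander1 n = meander_count (\<lambda>h. h = 1) n 0"
  using count_len_meander_end_alt[of "\<lambda>h. h = 1"] by (simp add: dyck_meander1_def[abs_def])

definition arch_from :: "nat \<Rightarrow> step list \<Rightarrow> bool" where
  "arch_from h s \<longleftrightarrow> valid_from h s \<and> s \<noteq> [] \<and> last s = C \<and>
     (\<forall>i < length s - 1. alts h s ! i \<noteq> 0)"

lemma not_arch_from_Nil [simp]: "\<not> arch_from h []"
  by (simp add: arch_from_def)

lemma cat_arch_eq_arch_from_0: "cat_arch = arch_from 0"
  by (auto simp: fun_eq_iff cat_arch_def arch_from_def dyck_cat_path_def)

lemma arch_from_Cons_U: "arch_from h (U # t) \<longleftrightarrow> arch_from (Suc h) t"
  by (cases t) (auto simp: arch_from_def All_less_Suc2)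

lemma arch_from_Cons_D: "arch_from h (D # t) \<longleftrightarrow> 2 \<le> h \<and> arch_from (h - 1) t"
  by (cases t) (auto simp: arch_from_def All_less_Suc2)

lemma arch_from_Cons_C: "arch_from h (C # t) \<longleftrightarrow> t = [] \<and> 1 < h"
  by (cases t) (auto simp: arch_from_def All_less_Suc2)

fun arch_count :: "nat \<Rightarrow> nat \<Rightarrow> nat" where
  "arch_count 0 h = 0"
| "arch_count (Suc m) h = arch_count m (Suc h) + (if 2 \<le> h then arch_count m (h - 1) else 0) +
     (if m = 0 \<and> 1 < h then 1 else 0)"

lemma card_arches: "card {s. length s = m \<and> arch_from h s} = arch_count m h"
proof (induction m arbitrary: h)
  case 0
  then show ?case by (simp add: arch_from_def)
next
  case (Suc m)
  let ?S = "{s. length s = Suc m \<and> arch_from h s}"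
  have "finite ?S"
    by (rule finite_subset[OF _ finite_step_lists_length[of "Suc m"]]) auto
  then have "card ?S = card {t. U # t \<in> ?S} + card {t. D # t \<in> ?S} + card {t. C # t \<in> ?S}"
    by (rule card_by_first_step) auto
  also have "{t. U # t \<in> ?S} = {s. length s = m \<and> arch_from (Suc h) s}"
    by (auto simp: arch_from_Cons_U)
  also have "{t. D # t \<in> ?S} = (if 2 \<le> h then {s. length s = m \<and> arch_from (h - 1) s} else {})"
    by (auto simp: arch_from_Cons_D)
  also have "{t. C # t \<in> ?S} = (if m = 0 \<and> 1 < h then {[]} else {})"
    by (auto simp: arch_from_Cons_C)
  finally show ?case
    using Suc by simp
qed

lemma count_len_cat_arch: "count_len cat_arch n = arch_count n 0"
  by (simp add: count_len_def cat_arch_eq_arch_from_0 card_arches)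

text \<open>Before its final catastrophe an arch from \<open>h + 1\<close> is a path staying at altitude
  \<open>\<ge> 1\<close> and ending at altitude \<open>\<ge> 2\<close>: a meander from \<open>h\<close> ending at \<open>\<ge> 1\<close>, lifted by one.\<close>

lemma arch_count_Suc_Suc: "arch_count (Suc l) (Suc h) = meander_count (\<lambda>x. 1 \<le> x) l h"
proof (induction l arbitrary: h)
  case (Suc l)
  show ?case
  proof (cases h)
    case 0
    then show ?thesis using Suc.IH[of 1] by simp
  next
    case (Suc h')
    then show ?thesis using Suc.IH[of "Suc h"] Suc.IH[of h'] by simp
  qed
qed simp

section \<open>The reflection principle\<close>

definition binom_int :: "nat \<Rightarrow> int \<Rightarrow> int" where
  "binom_int m t = (if 0 \<le> t then int (m choose nat t) else 0)"

text \<open>\<open>walk_count m j\<close> is the number of unconstrained \<open>\<plusminus>1\<close> walks of length \<open>m\<close>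
  from \<open>0\<close> to \<open>j\<close>.\<close>

definition walk_count :: "nat \<Rightarrow> int \<Rightarrow> int" where
  "walk_count m j = (if even (int m + j) then binom_int m ((int m + j) div 2) else 0)"

text \<open>Reflection principle: the walks from \<open>h\<close> to \<open>k\<close> that touch \<open>-1\<close> correspond to
  the walks from \<open>-h - 2\<close> to \<open>k\<close>.\<close>

definition meander_reflection :: "nat \<Rightarrow> nat \<Rightarrow> nat \<Rightarrow> int" where
  "meander_reflection m h k = walk_count m (int k - int h) - walk_count m (int k + int h + 2)"

lemma binom_int_Suc: "binom_int (Suc m) t = binom_int m (t - 1) + binom_int m t"
proof -
  consider "t < 0" | "t = 0" | "t \<ge> 1"
    by linarith
  then show ?thesis
  proof cases
    case 3
    define k where "k = nat (t - 1)"
    have "t = int (Suc k)" and "t - 1 = int k"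
      using 3 unfolding k_def by simp_all
    then show ?thesis
      unfolding binom_int_def by (simp only: nat_int) simp
  qed (auto simp: binom_int_def)
qed

lemma binom_int_symmetric: "binom_int m (int m - t) = binom_int m t"
proof -
  consider "t < 0" | "t > int m" | k where "t = int k" "k \<le> m"
    using nonneg_int_cases[of t] by fastforce
  then show ?thesis
  proof cases
    case 1
    then show ?thesis
      by (simp add: binom_int_def binomial_eq_0)
  next
    case 2
    then show ?thesis
      by (simp add: binom_int_def)
  next
    case 3
    then have "nat (int m - t) = m - k"
      by simp
    with 3 show ?thesis
      by (simp add: binom_int_def binomial_symmetric[symmetric])
  qed
qed

lemma walk_count_0: "walk_count 0 j = (if j = 0 then 1 else 0)"
  by (auto simp: walk_count_def binom_int_def)

lemma walk_count_Suc: "walk_count (Suc m) j = walk_count m (j - 1) + walk_count m (j + 1)"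
proof (cases "even (int m + 1 + j)")
  case True
  define t where "t = (int m + 1 + j) div 2"
  have "walk_count (Suc m) j = binom_int (Suc m) t"
    unfolding walk_count_def t_def using True by (simp add: ac_simps)
  moreover have "walk_count m (j - 1) = binom_int m (t - 1)"
  proof -
    have "even (int m + (j - 1))" and "(int m + (j - 1)) div 2 = t - 1"
      unfolding t_def using True by presburger+
    then show ?thesis
      unfolding walk_count_def by simp
  qed
  moreover have "walk_count m (j + 1) = binom_int m t"
  proof -
    have "even (int m + (j + 1))" and "(int m + (j + 1)) div 2 = t"
      unfolding t_def using True by presburger+
    then show ?thesis
      unfolding walk_count_def by simp
  qed
  ultimately show ?thesis
    by (simp add: binom_int_Suc)
next
  case False
  then have "odd (int (Suc m) + j)" "odd (int m + (j - 1))" "odd (int m + (j + 1))"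
    by presburger+
  then show ?thesis
    unfolding walk_count_def by simp
qed

lemma walk_count_uminus: "walk_count m (- j) = walk_count m j"
proof (cases "even (int m + j)")
  case True
  then have "(int m - j) div 2 = int m - (int m + j) div 2"
    by presburger
  with True show ?thesis
    by (simp add: walk_count_def binom_int_symmetric)
next
  case False
  then show ?thesis
    by (simp add: walk_count_def)
qed

lemma walk_count_eq_0:
  assumes "int m < j"
  shows "walk_count m j = 0"
proof (cases "even (int m + j)")
  case True
  then have "(int m + j) div 2 \<ge> int m + 1"
    using assms by presburger
  then have "m < nat ((int m + j) div 2)"
    by linarith
  then show ?thesis
    unfolding walk_count_def binom_int_def by (simp add: binomial_eq_0)
qed (simp add: walk_count_def)

lemma meander_reflection_Suc:
  "meander_reflection (Suc m) h k =
     meander_reflection m (Suc h) k + (if 1 \<le> h then meander_reflection m (h - 1) k else 0)"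
  by (cases h) (auto simp: meander_reflection_def walk_count_Suc algebra_simps)

lemma meander_count_reflection:
  assumes "m + h < N"
  shows "int (meander_count \<phi> m h) = (\<Sum>k<N. if \<phi> k then meander_reflection m h k else 0)"
  using assms
proof (induction m arbitrary: h)
  case 0
  have "(\<Sum>k<N. if \<phi> k then meander_reflection 0 h k else 0) =
      (\<Sum>k<N. if k = h then (if \<phi> k then 1 else 0) else 0)"
    by (rule sum.cong) (auto simp: meander_reflection_def walk_count_0)
  with 0 show ?case
    by simp
next
  case (Suc m)
  have "int (meander_count \<phi> (Suc m) h) =
      int (meander_count \<phi> m (Suc h)) + (if 1 \<le> h then int (meander_count \<phi> m (h - 1)) else 0)"
    by simp
  also have "\<dots> = (\<Sum>k<N. if \<phi> k then meander_reflection m (Suc h) k else 0) +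
      (if 1 \<le> h then (\<Sum>k<N. if \<phi> k then meander_reflection m (h - 1) k else 0) else 0)"
    using Suc.IH[of "Suc h"] Suc.IH[of "h - 1"] Suc.prems by simp
  also have "\<dots> = (\<Sum>k<N. if \<phi> k then meander_reflection (Suc m) h k else 0)"
    by (auto simp: meander_reflection_Suc sum.distrib[symmetric] intro!: sum.cong)
  finally show ?case .
qed

lemma sum_lessThan_telescope_2:
  fixes f :: "nat \<Rightarrow> 'a :: ab_group_add"
  assumes "1 \<le> N"
  shows "(\<Sum>k<N. if 1 \<le> k then f k - f (k + 2) else 0) = f 1 + f 2 - f N - f (N + 1)"
  using assms
proof (induction N rule: dec_induct)
  case base
  then show ?case by (simp add: numeral_2_eq_2)
next
  case (step n)
  then show ?case by (simp add: numeral_2_eq_2)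
qed

lemma arch_count_closed_form: "int (arch_count (n + 2) 0) = binom_int n ((int n - 1) div 2)"
proof -
  have "int (arch_count (n + 2) 0) = int (meander_count (\<lambda>k. 1 \<le> k) n 0)"
    using arch_count_Suc_Suc[of n 0] by (simp add: numeral_2_eq_2)
  also have "\<dots> = (\<Sum>k<n + 1. if 1 \<le> k then walk_count n (int k) - walk_count n (int (k + 2)) else 0)"
    by (subst meander_count_reflection[where N = "n + 1"])
      (auto simp: meander_reflection_def ac_simps intro!: sum.cong)
  also have "\<dots> = walk_count n 1 + walk_count n 2"
    by (subst sum_lessThan_telescope_2) (simp_all add: walk_count_eq_0)
  also have "\<dots> = walk_count n (- 1) + walk_count n (- 2)"
    by (simp only: walk_count_uminus)
  also have "\<dots> = binom_int n ((int n - 1) div 2)"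
  proof (cases "even n")
    case True
    then have "(int n + - 2) div 2 = (int n - 1) div 2"
      by presburger
    with True show ?thesis
      unfolding walk_count_def by auto
  next
    case False
    then show ?thesis
      unfolding walk_count_def by auto
  qed
  finally show ?thesis .
qed

lemma count_len_cat_arch_binomial:
  assumes "2 \<le> n"
  shows "int (count_len cat_arch n) = (if \<lfloor>(real n - 3) / 2\<rfloor> < 0 then 0
     else int ((n - 2) choose nat \<lfloor>(real n - 3) / 2\<rfloor>))"
proof -
  obtain k where k: "n = k + 2"
    using assms by (metis add.commute le_add_diff_inverse)
  have "real n - 3 = real_of_int (int k - 1)"
    using k by simp
  then have "\<lfloor>(real n - 3) / 2\<rfloor> = (int k - 1) div 2"
    using floor_divide_of_int_eq[of "int k - 1" 2] by simp
  then show ?thesis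
    using arch_count_closed_form[of k] by (simp add: count_len_cat_arch k binom_int_def)
qed

text \<open>Time reversal: an excursion of length \<open>n + 1\<close> is an up-step followed by a path
  from \<open>1\<close> to \<open>0\<close>, and these are equinumerous with the paths from \<open>0\<close> to \<open>1\<close>.\<close>

lemma meander_count_excursion_Suc:
  "meander_count (\<lambda>k. k = 0) (Suc n) 0 = meander_count (\<lambda>k. k = 1) n 0"
proof -
  have "int (meander_count (\<lambda>k. k = 0) n 1) = meander_reflection n 1 0"
    by (subst meander_count_reflection[where N = "n + 2"]) (simp_all add: sum.delta)
  moreover have "int (meander_count (\<lambda>k. k = 1) n 0) = meander_reflection n 0 1"
    by (subst meander_count_reflection[where N = "n + 2"]) (simp_all add: sum.delta)
  moreover have "meander_reflection n 1 0 = meander_reflection n 0 1"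
    using walk_count_uminus[of n 1] by (simp add: meander_reflection_def)
  ultimately show ?thesis
    by simp
qed

section \<open>Decomposition at the last visit to altitude 0\<close>

lemma meander_count_True_split:
  "meander_count (\<lambda>_. True) m h = meander_count (\<lambda>k. k = 0) m h + meander_count (\<lambda>k. 1 \<le> k) m h"
  by (induction m arbitrary: h) auto

text \<open>A meander ending at a positive altitude either never visits \<open>0\<close>, and is then a lifted
  meander from \<open>h - 1\<close>, or it is an up-step and a lifted meander after its last visit to \<open>0\<close>.\<close>

lemma meander_count_last_visit:
  "meander_count (\<lambda>k. 1 \<le> k \<and> \<phi> (k - 1)) m h =
     (if 1 \<le> h then meander_count \<phi> m (h - 1) else 0) +
     (\<Sum>i<m. meander_count (\<lambda>k. k = 0) i h * meander_count \<phi> (m - 1 - i) 0)"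
proof (induction m arbitrary: h)
  case (Suc m)
  let ?G = "meander_count (\<lambda>k. 1 \<le> k \<and> \<phi> (k - 1))"
  let ?E = "meander_count (\<lambda>k. k = 0)"
  define S where "S h = (\<Sum>i<m. ?E i h * meander_count \<phi> (m - 1 - i) 0)" for h
  have IH: "?G m h = (if 1 \<le> h then meander_count \<phi> m (h - 1) else 0) + S h" for h
    unfolding S_def by (rule Suc.IH)
  have sum_Suc: "(\<Sum>i<Suc m. ?E i h * meander_count \<phi> (Suc m - 1 - i) 0) =
      (if h = 0 then meander_count \<phi> m 0 else 0) + S (Suc h) + (if 1 \<le> h then S (h - 1) else 0)"
  proof -
    have "(\<Sum>i<Suc m. ?E i h * meander_count \<phi> (Suc m - 1 - i) 0) =
        ?E 0 h * meander_count \<phi> m 0 + (\<Sum>i<m. ?E (Suc i) h * meander_count \<phi> (m - 1 - i) 0)"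
      by (subst sum.lessThan_Suc_shift) simp
    then show ?thesis
      unfolding S_def by (cases h) (simp_all add: sum.distrib distrib_right)
  qed
  show ?case
  proof (cases h)
    case 0
    then show ?thesis
      using IH[of 1] sum_Suc by simp
  next
    case (Suc h')
    then show ?thesis
      using IH[of "Suc h"] IH[of h'] sum_Suc meander_count.simps(2)[of \<phi> m h'] by auto
  qed
qed simp

lemma meander_count_last_visit_0:
  "meander_count (\<lambda>k. 1 \<le> k \<and> \<phi> (k - 1)) (Suc m) 0 =
     (\<Sum>i=0..m. meander_count (\<lambda>k. k = 0) i 0 * meander_count \<phi> (m - i) 0)"
  by (subst meander_count_last_visit) (simp add: atLeast0AtMost lessThan_Suc_atMost)

section \<open>Generating functions\<close>

lemma fps_nth_gf [simp]: "fps_nth (gf P) n = real (count_len P n)"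
  by (simp add: gf_def)

lemma gf_cat_arch_eq: "gf cat_arch = fps_X ^ 2 * (gf dyck_meander - gf dyck_excursion)"
proof (rule fps_ext)
  fix n
  show "fps_nth (gf cat_arch) n = fps_nth (fps_X ^ 2 * (gf dyck_meander - gf dyck_excursion)) n"
  proof (cases "n < 2")
    case True
    then have "n = 0 \<or> n = 1"
      by auto
    then show ?thesis
      by (auto simp: fps_X_power_mult_nth count_len_cat_arch)
  next
    case False
    then obtain m where m: "n = Suc (Suc m)"
      by (metis add_2_eq_Suc le_add_diff_inverse not_less)
    then show ?thesis
      using arch_count_Suc_Suc[of m 0] meander_count_True_split[of m 0]
      by (simp add: fps_X_power_mult_nth count_len_cat_arch count_len_dyck_meander count_len_dyck_excursion)
  qed
qed

lemma fps_nth_X_mult_Suc: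
  fixes f g :: "'a :: comm_semiring_1 fps"
  shows "fps_nth (fps_X * (f * g)) (Suc n) = (\<Sum>i=0..n. fps_nth f i * fps_nth g (n - i))"
  unfolding fps_X_mult_nth by (simp add: fps_mult_nth)

lemma gf_dyck_meander_eq:
  "gf dyck_meander - gf dyck_excursion = fps_X * (gf dyck_excursion * gf dyck_meander)"
proof (rule fps_ext)
  fix n
  show "fps_nth (gf dyck_meander - gf dyck_excursion) n =
      fps_nth (fps_X * (gf dyck_excursion * gf dyck_meander)) n"
  proof (cases n)
    case (Suc m)
    have "meander_count (\<lambda>_. True) (Suc m) 0 = meander_count (\<lambda>k. k = 0) (Suc m) 0 +
        (\<Sum>i=0..m. meander_count (\<lambda>k. k = 0) i 0 * meander_count (\<lambda>_. True) (m - i) 0)"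
      using meander_count_True_split[of "Suc m" 0] meander_count_last_visit_0[of "\<lambda>_. True" m]
      by simp
    then show ?thesis
      unfolding Suc fps_nth_X_mult_Suc
      by (simp add: count_len_dyck_meander count_len_dyck_excursion del: meander_count.simps)
  qed (simp add: count_len_dyck_meander count_len_dyck_excursion)
qed

lemma gf_dyck_meander1_eq: "gf dyck_meander1 = fps_X * (gf dyck_excursion * gf dyck_excursion)"
proof (rule fps_ext)
  fix n
  show "fps_nth (gf dyck_meander1) n = fps_nth (fps_X * (gf dyck_excursion * gf dyck_excursion)) n"
  proof (cases n)
    case (Suc m)
    have "(\<lambda>k::nat. 1 \<le> k \<and> k - 1 = 0) = (\<lambda>k. k = 1)"
      by auto
    then have "meander_count (\<lambda>k. k = 1) (Suc m) 0 =
        (\<Sum>i=0..m. meander_count (\<lambda>k. k = 0) i 0 * meander_count (\<lambda>k. k = 0) (m - i) 0)"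
      using meander_count_last_visit_0[of "\<lambda>k. k = 0" m] by simp
    then show ?thesis
      unfolding Suc fps_nth_X_mult_Suc
      by (simp add: count_len_dyck_meander1 count_len_dyck_excursion del: meander_count.simps)
  qed (simp add: count_len_dyck_meander1)
qed

lemma gf_dyck_excursion_eq: "gf dyck_excursion = 1 + fps_X * gf dyck_meander1"
proof (rule fps_ext)
  fix n
  show "fps_nth (gf dyck_excursion) n = fps_nth (1 + fps_X * gf dyck_meander1) n"
    by (cases n) (simp_all add: count_len_dyck_excursion count_len_dyck_meander1
        meander_count_excursion_Suc del: meander_count.simps(2))
qed

lemma gf_cat_arch_quotient:
  "gf cat_arch = fps_X * (gf dyck_meander - gf dyck_excursion - gf dyck_meander1) / gf dyck_excursion"
proof -
  let ?M = "gf dyck_meander" and ?E = "gf dyck_excursion"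
  have "fps_nth ?E 0 = 1"
    by (simp add: count_len_dyck_excursion)
  then have "?E \<noteq> 0"
    by (metis fps_zero_nth zero_neq_one)
  have "?M - ?E - gf dyck_meander1 = fps_X * (?E * ?M) - fps_X * (?E * ?E)"
    by (simp only: gf_dyck_meander_eq gf_dyck_meander1_eq)
  also have "\<dots> = fps_X * ?E * (?M - ?E)"
    by (simp add: algebra_simps)
  finally have "fps_X * (?M - ?E - gf dyck_meander1) = fps_X * (fps_X * ?E * (?M - ?E))"
    by simp
  also have "\<dots> = fps_X ^ 2 * (?M - ?E) * ?E"
    by (simp add: power2_eq_square ac_simps)
  also have "\<dots> = gf cat_arch * ?E"
    by (simp add: gf_cat_arch_eq)
  finally show ?thesis
    using \<open>?E \<noteq> 0\<close> by simp
qed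

section \<open>Evaluation in the disc of radius 1/2\<close>

lemma meander_count_le_power: "meander_count \<phi> m h \<le> 2 ^ m"
proof (induction m arbitrary: h)
  case (Suc m)
  have "meander_count \<phi> (Suc m) h \<le> meander_count \<phi> m (Suc h) + meander_count \<phi> m (h - 1)"
    by simp
  also have "\<dots> \<le> 2 ^ m + 2 ^ m"
    using Suc.IH by (intro add_mono)
  finally show ?case
    by simp
qed simp

lemma arch_count_le_power: "arch_count n 0 \<le> 2 ^ n"
proof (cases n)
  case (Suc l)
  then show ?thesis
  proof (cases l)
    case (Suc m)
    have "arch_count n 0 = meander_count (\<lambda>k. 1 \<le> k) m 0"
      using arch_count_Suc_Suc[of m 0] \<open>n = Suc l\<close> Suc by simp
    also have "\<dots> \<le> 2 ^ m"
      by (rule meander_count_le_power)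
    also have "\<dots> \<le> 2 ^ n"
      using \<open>n = Suc l\<close> Suc by simp
    finally show ?thesis .
  qed simp
qed simp

lemma fps_conv_radius_ge_inverse:
  fixes f :: "real fps"
  assumes "0 < c" and "\<And>n. \<bar>fps_nth f n\<bar> \<le> c ^ n"
  shows "ereal (inverse c) \<le> fps_conv_radius f"
  unfolding fps_conv_radius_def
proof (rule conv_radius_geI_ex')
  fix r :: real
  assume r: "0 < r" "ereal r < ereal (inverse c)"
  then have "c * r < 1"
    using \<open>0 < c\<close> by (simp add: field_simps)
  then have "summable (\<lambda>n. (c * r) ^ n)"
    using r \<open>0 < c\<close> by (intro summable_geometric) simp
  moreover have "norm (fps_nth f n * of_real r ^ n) \<le> (c * r) ^ n" for n
    using assms(2)[of n] r
    by (simp add: abs_mult power_mult_distrib mult_right_mono)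
  ultimately show "summable (\<lambda>n. fps_nth f n * of_real r ^ n)"
    by (rule summable_comparison_test'[where N = 0])
qed

lemma abs_less_conv_radius_gf:
  fixes z :: real
  assumes "\<And>n. count_len P n \<le> 2 ^ n" and "\<bar>z\<bar> < 1/2"
  shows "ereal \<bar>z\<bar> < fps_conv_radius (gf P)"
proof -
  have "\<bar>fps_nth (gf P) n\<bar> \<le> 2 ^ n" for n
    using assms(1)[of n] by (simp flip: of_nat_le_iff)
  then have "ereal (1/2) \<le> fps_conv_radius (gf P)"
    using fps_conv_radius_ge_inverse[of 2 "gf P"] by simp
  moreover have "ereal \<bar>z\<bar> < ereal (1/2)"
    using assms(2) by simp
  ultimately show ?thesis
    by (metis less_le_trans)
qed

lemma fps_conv_radius_mult_gt:
  "r < fps_conv_radius f \<Longrightarrow> r < fps_conv_radius g \<Longrightarrow> r < fps_conv_radius (f * g)"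
  by (rule less_le_trans[OF _ fps_conv_radius_mult]) simp

lemma fps_conv_radius_add_gt:
  "r < fps_conv_radius f \<Longrightarrow> r < fps_conv_radius g \<Longrightarrow> r < fps_conv_radius (f + g)"
  by (rule less_le_trans[OF _ fps_conv_radius_add]) simp

lemma fps_conv_radius_diff_gt:
  "r < fps_conv_radius f \<Longrightarrow> r < fps_conv_radius g \<Longrightarrow> r < fps_conv_radius (f - g)"
  by (rule less_le_trans[OF _ fps_conv_radius_diff]) simp

lemmas fps_conv_radius_gt_intros =
  fps_conv_radius_mult_gt fps_conv_radius_add_gt fps_conv_radius_diff_gt

context
  fixes z :: real
  assumes z: "\<bar>z\<bar> < 1/2"
begin

lemma abs_less_conv_radius_gf_dyck_excursion:
  "ereal \<bar>z\<bar> < fps_conv_radius (gf dyck_excursion)"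
  by (rule abs_less_conv_radius_gf[OF _ z]) (simp add: count_len_dyck_excursion meander_count_le_power)

lemma abs_less_conv_radius_gf_dyck_meander:
  "ereal \<bar>z\<bar> < fps_conv_radius (gf dyck_meander)"
  by (rule abs_less_conv_radius_gf[OF _ z]) (simp add: count_len_dyck_meander meander_count_le_power)

lemma abs_less_conv_radius_gf_cat_arch:
  "ereal \<bar>z\<bar> < fps_conv_radius (gf cat_arch)"
  by (rule abs_less_conv_radius_gf[OF _ z]) (simp add: count_len_cat_arch arch_count_le_power)

lemmas abs_less_conv_radius_gfs =
  abs_less_conv_radius_gf_dyck_excursion abs_less_conv_radius_gf_dyck_meander

lemma eval_gf_dyck_excursion:
  "eval_fps (gf dyck_excursion) z = 1 + z^2 * eval_fps (gf dyck_excursion) z ^ 2"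
proof -
  have "eval_fps (gf dyck_excursion) z =
      eval_fps (1 + fps_X * (fps_X * (gf dyck_excursion * gf dyck_excursion))) z"
    by (subst (1) gf_dyck_excursion_eq) (simp add: gf_dyck_meander1_eq)
  also have "\<dots> = 1 + z * (z * (eval_fps (gf dyck_excursion) z * eval_fps (gf dyck_excursion) z))"
    by (simp add: eval_fps_mult eval_fps_add fps_conv_radius_gt_intros abs_less_conv_radius_gfs)
  finally show ?thesis
    by (simp add: power2_eq_square algebra_simps)
qed

lemma eval_gf_dyck_meander:
  "eval_fps (gf dyck_meander) z - eval_fps (gf dyck_excursion) z =
     z * (eval_fps (gf dyck_excursion) z * eval_fps (gf dyck_meander) z)"
proof -
  have "eval_fps (gf dyck_meander) z - eval_fps (gf dyck_excursion) z =
      eval_fps (gf dyck_meander - gf dyck_excursion) z"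
    by (simp add: eval_fps_diff abs_less_conv_radius_gfs)
  also have "\<dots> = z * (eval_fps (gf dyck_excursion) z * eval_fps (gf dyck_meander) z)"
    by (simp add: gf_dyck_meander_eq eval_fps_mult fps_conv_radius_gt_intros abs_less_conv_radius_gfs)
  finally show ?thesis .
qed

lemma eval_gf_cat_arch:
  "eval_fps (gf cat_arch) z = z^2 * (eval_fps (gf dyck_meander) z - eval_fps (gf dyck_excursion) z)"
  by (subst gf_cat_arch_eq)
    (simp add: eval_fps_mult eval_fps_diff fps_conv_radius_gt_intros abs_less_conv_radius_gfs)

end

text \<open>For \<open>\<bar>x\<bar> < 1/2\<close> the two roots of \<open>w\<^sup>2 - w + x\<^sup>2\<close> lie on either side of \<open>1/2\<close>,
  and a continuous branch starting at \<open>w 0 = 0\<close> cannot reach \<open>1/2\<close>, which would force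
  \<open>x\<^sup>2 = 1/4\<close>.\<close>

lemma continuous_quadratic_root_branch:
  fixes w :: "real \<Rightarrow> real"
  assumes cont: "continuous_on {-1/2<..<1/2} w" and w0: "w 0 = 0"
    and quad: "\<And>x. \<bar>x\<bar> < 1/2 \<Longrightarrow> w x ^ 2 - w x + x ^ 2 = 0"
    and z: "\<bar>z\<bar> < 1/2"
  shows "w z = (1 - sqrt (1 - 4 * z^2)) / 2"
proof -
  have small: "x^2 < 1/4" if "\<bar>x\<bar> < 1/2" for x :: real
    using power_strict_mono[of "\<bar>x\<bar>" "1/2" 2] that by (simp add: power2_eq_square)
  define s where "s = sqrt (1 - 4 * z^2)"
  have "s^2 = 1 - 4 * z^2" and "s > 0"
    using small[OF z] by (simp_all add: s_def)
  then have "(w z - (1 - s)/2) * (w z - (1 + s)/2) = w z ^ 2 - w z + z^2"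
    by (simp add: power2_eq_square field_simps)
  then have "w z = (1 - s)/2 \<or> w z = (1 + s)/2"
    using quad[OF z] by simp
  moreover have "w z < 1/2"
  proof (rule ccontr)
    assume "\<not> w z < 1/2"
    have "continuous_on {min 0 z..max 0 z} w"
      by (rule continuous_on_subset[OF cont]) (use z in auto)
    then obtain x where "min 0 z \<le> x" "x \<le> max 0 z" "w x = 1/2"
      using IVT'[of w 0 "1/2" z] IVT2'[of w 0 "1/2" z] w0 \<open>\<not> w z < 1/2\<close>
      by (cases "0 \<le> z") (auto simp: min_def max_def)
    moreover from this have "\<bar>x\<bar> < 1/2"
      using z by auto
    ultimately have "x^2 = 1/4"
      using quad[of x] by (simp add: \<open>w x = 1/2\<close> power2_eq_square)
    with small[OF \<open>\<bar>x\<bar> < 1/2\<close>] show False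
      by simp
  qed
  ultimately show ?thesis
    using \<open>s > 0\<close> by (auto simp: s_def)
qed

lemma eval_gf_dyck_excursion_closed_form:
  assumes "\<bar>z\<bar> < 1/2"
  shows "z^2 * eval_fps (gf dyck_excursion) z = (1 - sqrt (1 - 4 * z^2)) / 2"
proof (rule continuous_quadratic_root_branch[OF _ _ _ assms])
  have "{-1/2<..<1/2::real} \<subseteq> eball 0 (fps_conv_radius (gf dyck_excursion))"
    using abs_less_conv_radius_gf_dyck_excursion by (auto simp: eball_def)
  then show "continuous_on {-1/2<..<1/2} (\<lambda>x. x^2 * eval_fps (gf dyck_excursion) x)"
    by (intro continuous_intros continuous_on_subset[OF continuous_on_eval_fps])
  show "(x^2 * eval_fps (gf dyck_excursion) x)^2 - x^2 * eval_fps (gf dyck_excursion) x + x^2 = 0"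
    if "\<bar>x\<bar> < 1/2" for x
  proof -
    have "(x^2 * eval_fps (gf dyck_excursion) x)^2 - x^2 * eval_fps (gf dyck_excursion) x + x^2 =
        x^2 * (1 + x^2 * eval_fps (gf dyck_excursion) x ^ 2 - eval_fps (gf dyck_excursion) x)"
      by (simp add: power2_eq_square algebra_simps)
    then show ?thesis
      using eval_gf_dyck_excursion[OF that] by simp
  qed
qed simp

lemma cat_arch_value_from_gf_equations:
  fixes z e m a :: real
  assumes z: "\<bar>z\<bar> < 1/2"
    and e: "e = 1 + z^2 * e^2" and m: "m - e = z * (e * m)" and a: "a = z^2 * (m - e)"
    and root: "z^2 * e = (1 - sqrt (1 - 4 * z^2)) / 2"
  shows "a = (1/2) * (2 * z^2 + z - 1 + sqrt ((1 - 2*z) * (1 + 2*z) * (1 - z)^2)) / (1 - 2*z)"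
proof -
  have "(1 - 2*z) * (1 + 2*z) * (1 - z)^2 = (1 - 4 * z^2) * (1 - z)^2"
    by algebra
  then have "sqrt ((1 - 2*z) * (1 + 2*z) * (1 - z)^2) = sqrt ((1 - 4 * z^2) * (1 - z)^2)"
    by (simp only:)
  also have "\<dots> = sqrt (1 - 4 * z^2) * \<bar>1 - z\<bar>"
    by (simp only: real_sqrt_mult real_sqrt_abs)
  also have "\<dots> = (1 - 2 * z^2 * e) * (1 - z)"
    using root z by simp
  finally have "sqrt ((1 - 2*z) * (1 + 2*z) * (1 - z)^2) = (1 - z) * (1 - 2 * z^2 * e)"
    by simp
  then have rhs: "(1/2) * (2 * z^2 + z - 1 + sqrt ((1 - 2*z) * (1 + 2*z) * (1 - z)^2)) =
      z^2 * (1 - e + z * e)"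
    by (simp add: algebra_simps)
  have "1 - z * e \<noteq> 0"
  proof
    assume "1 - z * e = 0"
    then have "z * (e * m) = m"
      by (metis eq_iff_diff_eq_0 mult.assoc mult_1)
    with m have "e = 0"
      by simp
    with \<open>1 - z * e = 0\<close> show False
      by simp
  qed
  moreover have "a * (1 - 2*z) * (1 - z * e) = z^2 * (1 - e + z * e) * (1 - z * e)"
    \<comment> \<open>modulo the equations for \<open>e\<close> and \<open>m\<close>, both sides reduce to \<open>z (e - 1) (1 - 2z)\<close>\<close>
    using e m a by algebra
  ultimately have "a * (1 - 2*z) = z^2 * (1 - e + z * e)"
    by simp
  moreover have "1 - 2*z \<noteq> 0"
    using z by simp
  ultimately show ?thesis
    unfolding rhs by (simp add: field_simps)
qed

lemma sums_count_len_cat_arch: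
  assumes "\<bar>z\<bar> < 1/2"
  shows "(\<lambda>n. real (count_len cat_arch n) * z ^ n) sums
    ((1/2) * (2 * z^2 + z - 1 + sqrt ((1 - 2*z) * (1 + 2*z) * (1 - z)^2)) / (1 - 2*z))"
proof -
  have "(\<lambda>n. fps_nth (gf cat_arch) n * z ^ n) sums eval_fps (gf cat_arch) z"
    using abs_less_conv_radius_gf_cat_arch[OF assms] by (intro sums_eval_fps) simp
  moreover have "eval_fps (gf cat_arch) z =
      (1/2) * (2 * z^2 + z - 1 + sqrt ((1 - 2*z) * (1 + 2*z) * (1 - z)^2)) / (1 - 2*z)"
    by (rule cat_arch_value_from_gf_equations[OF assms eval_gf_dyck_excursion[OF assms]
        eval_gf_dyck_meander[OF assms] eval_gf_cat_arch[OF assms]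
        eval_gf_dyck_excursion_closed_form[OF assms]])
  ultimately show ?thesis
    by simp
qed

lemma count_len_cat_arch_first_values:
  "map (count_len cat_arch) [0..<10] = [0, 0, 0, 1, 1, 3, 4, 10, 15, 35]"
  by (simp add: count_len_cat_arch upt_rec numeral_eq_Suc)

theorem proposition3p2:
  fixes a :: "nat \<Rightarrow> nat" and A M E M1 :: "real fps"
  assumes "a = count_len cat_arch"
    and "A = gf cat_arch"
    and "M = gf dyck_meander" and "E = gf dyck_excursion" and "M1 = gf dyck_meander1"
  shows "a 0 = 0 \<and> a 1 = 0 \<and>
    (\<forall>n\<ge>2. int (a n) = (if \<lfloor>(real n - 3) / 2\<rfloor> < 0 then 0
                        else int ((n - 2) choose nat \<lfloor>(real n - 3) / 2\<rfloor>))) \<and>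
    A = fps_X * (M - E - M1) / E \<and>
    (\<forall>z::real. \<bar>z\<bar> < 1/2 \<longrightarrow>
       (\<lambda>n. real (a n) * z ^ n) sums
         ((1/2) * (2 * z^2 + z - 1 + sqrt ((1 - 2*z) * (1 + 2*z) * (1 - z)^2)) / (1 - 2*z))) \<and>
    map a [0..<10] = [0, 0, 0, 1, 1, 3, 4, 10, 15, 35]"
  using assms count_len_cat_arch_binomial gf_cat_arch_quotient sums_count_len_cat_arch
    count_len_cat_arch_first_values
  by (simp add: count_len_cat_arch)

end
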